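(* Let $\mathcal{T}$ be an $l$-eligible microdata table and run the algorithm described in the context (arbitrary tie-breaking). If the algorithm terminates during Phase Two, then $|\ddot{R}| \le l\cdot h(\dot{R}) + l - 1$, where $\dot{R}$ is $R$ at the end of Phase One and $\ddot{R}$ is $R$ at termination.
   Context: A microdata table $\mathcal{T}$ is a multiset of $n$ tuples with values on $d$ quasi-identifier (QI) attributes and one sensitive attribute (SA). For a multiset $Q$ and SA value $v$, $h(Q,v)$ is the number of tuples in $Q$ with SA value $v$, $h(Q)=\max_v h(Q,v)$, pillars of $Q$ are the $v$ with $h(Q,v)=h(Q)$; $Q$ is $l$-eligible if $|Q|\ge l\cdot h(Q)$. Let $Q_1,\dots,Q_s$ be the maximal classes of tuples of $\mathcal{T}$ with identical values on all QI attributes; the algorithm only moves tuples from these groups into a set $R$ (initially empty). Phase One: for each $i$, while $Q_i$ is not $l$-eligible, move a tuple of a pillar of $Q_i$ to $R$; call the result $\dot{Q}_i,\dot{R}$; if $R$ is $l$-eligible, terminate. Phase Two terminology (w.r.t. current state): a group $Q$ is thin if $|Q|=l\cdot h(Q)$ and fat if $|Q|\ge l\cdot h(Q)+1$; $Q$ is conflicting if some pillar of $Q$ is a pillar of $R$; $Q$ is dead if thin and conflicting, alive otherwise; an SA value $v$ is alive if some alive group $Q$ has $h(Q,v)>0$. Phase Two iterates: if no SA value is alive, Phase Two ends (go to Phase Three). Otherwise pick an alive SA value $v$ minimizing $h(R,v)$ and an alive group $Q$ with $h(Q,v)>0$ (ties arbitrary); if $Q$ is fat move one tuple with SA value $v$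 from $Q$ to $R$; if $Q$ is thin move one tuple of each pillar of $Q$ to $R$. If $R$ is now $l$-eligible, the algorithm terminates. *)

theory Defs
  imports Main "HOL-Library.Multiset"
begin

text \<open>A tuple is a pair (QI-vector, SA value); a table is a multiset of tuples.\<close>

definition hv :: "('q \<times> 'v) multiset \<Rightarrow> 'v \<Rightarrow> nat" where
  "hv Q v = size (filter_mset (\<lambda>t. snd t = v) Q)"

definition hmax :: "('q \<times> 'v) multiset \<Rightarrow> nat" where
  "hmax Q = Max (insert 0 ((\<lambda>v. hv Q v) ` (snd ` set_mset Q)))"

definition pillar :: "('q \<times> 'v) multiset \<Rightarrow> 'v \<Rightarrow> bool" where
  "pillar Q v \<longleftrightarrow> hv Q v = hmax Q"

definition eligible :: "nat \<Rightarrow> ('q \<times> 'v) multiset \<Rightarrow> bool" where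
  "eligible l Q \<longleftrightarrow> size Q \<ge> l * hmax Q"

definition QIs :: "('q \<times> 'v) multiset \<Rightarrow> 'q set" where
  "QIs T = fst ` set_mset T"

definition grp :: "('q \<times> 'v) multiset \<Rightarrow> 'q \<Rightarrow> ('q \<times> 'v) multiset" where
  "grp G q = filter_mset (\<lambda>t. fst t = q) G"

definition thin :: "nat \<Rightarrow> ('q \<times> 'v) multiset \<Rightarrow> bool" where
  "thin l Q \<longleftrightarrow> size Q = l * hmax Q"

definition fat :: "nat \<Rightarrow> ('q \<times> 'v) multiset \<Rightarrow> bool" where
  "fat l Q \<longleftrightarrow> size Q \<ge> l * hmax Q + 1"

definition conflicting :: "('q \<times> 'v) multiset \<Rightarrow> ('q \<times> 'v) multiset \<Rightarrow> bool" where
  "conflicting Q R \<longleftrightarrow> (\<exists>v. pillar Q v \<and> pillar R v)"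

definition dead :: "nat \<Rightarrow> ('q \<times> 'v) multiset \<Rightarrow> ('q \<times> 'v) multiset \<Rightarrow> bool" where
  "dead l Q R \<longleftrightarrow> thin l Q \<and> conflicting Q R"

definition alive_grp :: "nat \<Rightarrow> ('q \<times> 'v) multiset \<Rightarrow> ('q \<times> 'v) multiset \<Rightarrow> bool" where
  "alive_grp l Q R \<longleftrightarrow> \<not> dead l Q R"

definition alive_val :: "nat \<Rightarrow> ('q \<times> 'v) multiset \<Rightarrow> ('q \<times> 'v) multiset \<Rightarrow> ('q \<times> 'v) multiset \<Rightarrow> 'v \<Rightarrow> bool" where
  "alive_val l T G R v \<longleftrightarrow> (\<exists>q\<in>QIs T. alive_grp l (grp G q) R \<and> hv (grp G q) v > 0)"

definition phase1_step :: "nat \<Rightarrow> ('q \<times> 'v) multiset \<Rightarrow>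
    (('q \<times> 'v) multiset \<times> ('q \<times> 'v) multiset) \<Rightarrow> (('q \<times> 'v) multiset \<times> ('q \<times> 'v) multiset) \<Rightarrow> bool" where
  "phase1_step l T s s' \<longleftrightarrow> (case s of (G, R) \<Rightarrow>
     (\<exists>q v. q \<in> QIs T \<and> \<not> eligible l (grp G q) \<and> pillar (grp G q) v \<and> hv (grp G q) v > 0 \<and>
        s' = (G - {#(q, v)#}, R + {#(q, v)#})))"

definition phase1_done :: "nat \<Rightarrow> ('q \<times> 'v) multiset \<Rightarrow> ('q \<times> 'v) multiset \<Rightarrow> bool" where
  "phase1_done l T G \<longleftrightarrow> (\<forall>q\<in>QIs T. eligible l (grp G q))"

definition phase2_step :: "nat \<Rightarrow> ('q \<times> 'v) multiset \<Rightarrow>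
    (('q \<times> 'v) multiset \<times> ('q \<times> 'v) multiset) \<Rightarrow> (('q \<times> 'v) multiset \<times> ('q \<times> 'v) multiset) \<Rightarrow> bool" where
  "phase2_step l T s s' \<longleftrightarrow> (case s of (G, R) \<Rightarrow>
     \<not> eligible l R \<and>
     (\<exists>v q. alive_val l T G R v \<and> (\<forall>u. alive_val l T G R u \<longrightarrow> hv R v \<le> hv R u) \<and>
        q \<in> QIs T \<and> alive_grp l (grp G q) R \<and> hv (grp G q) v > 0 \<and>
        ((fat l (grp G q) \<and> s' = (G - {#(q, v)#}, R + {#(q, v)#})) \<or>
         (thin l (grp G q) \<and>
           (let M = image_mset (\<lambda>p. (q, p)) (mset_set {p. pillar (grp G q) p})
            in s' = (G - M, R + M))))))"

end

theory Submission
  imports Defs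
begin

text \<open>Throughout Phase Two the maximal SA frequency of \<open>R\<close> never grows: a fat group
  hands over a tuple of an SA value of minimal frequency in \<open>R\<close>, and such a value cannot be
  a pillar of \<open>R\<close> (otherwise all values of the fat group, more than \<open>l\<close> of them, would be
  pillars of \<open>R\<close>, making \<open>R\<close> \<open>l\<close>-eligible); a thin alive group is not conflicting, so it
  hands over at most \<open>l\<close> tuples, none of a pillar of \<open>R\<close>. Since \<open>R\<close> is not \<open>l\<close>-eligible
  before the last move, \<open>|R| \<le> l \<cdot> h(R) - 1\<close> then, and the last move adds at most \<open>l\<close>
  tuples.\<close>

lemma hv_eq_count: "hv Q v = count (image_mset snd Q) v"
  unfolding hv_def by (induction Q) auto

lemma hv_plus: "hv (A + B) v = hv A v + hv B v"
  by (simp add: hv_eq_count)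

lemma hv_image_mset_set:
  assumes "finite P"
  shows "hv (image_mset (\<lambda>p. (q, p)) (mset_set P)) u = (if u \<in> P then 1 else 0)"
  using assms by (simp add: hv_eq_count multiset.map_comp o_def count_mset_set)

lemma hv_pos_iff: "0 < hv Q v \<longleftrightarrow> v \<in> snd ` set_mset Q"
  by (auto simp: hv_eq_count image_iff)

lemma hv_le_hmax: "hv Q v \<le> hmax Q"
proof (cases "v \<in> snd ` set_mset Q")
  case True
  then show ?thesis unfolding hmax_def by (intro Max_ge) auto
next
  case False
  then show ?thesis using hv_pos_iff[of Q v] by simp
qed

lemma hmax_leI: "(\<And>v. hv Q v \<le> K) \<Longrightarrow> hmax Q \<le> K"
  unfolding hmax_def by (subst Max_le_iff) auto

lemma size_eq_sum_hv: "size Q = (\<Sum>v\<in>snd ` set_mset Q. hv Q v)"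
proof -
  have "size Q = size (image_mset snd Q)" by simp
  also have "\<dots> = (\<Sum>v\<in>set_mset (image_mset snd Q). count (image_mset snd Q) v)"
    by (rule size_multiset_overloaded_eq)
  finally show ?thesis by (simp add: hv_eq_count)
qed

lemma sum_hv_le_size:
  assumes "finite S"
  shows "(\<Sum>v\<in>S. hv Q v) \<le> size Q"
proof -
  have "(\<Sum>v\<in>S. hv Q v) \<le> (\<Sum>v\<in>S \<union> snd ` set_mset Q. hv Q v)"
    by (rule sum_mono2) (use assms in auto)
  also have "\<dots> = (\<Sum>v\<in>snd ` set_mset Q. hv Q v)"
    by (rule sum.mono_neutral_right) (use assms in \<open>auto simp: hv_eq_count count_eq_zero_iff\<close>)
  finally show ?thesis by (simp only: size_eq_sum_hv[symmetric])
qed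

lemma size_le_card_values_mult_hmax: "size Q \<le> card (snd ` set_mset Q) * hmax Q"
  using sum_bounded_above[of "snd ` set_mset Q" "hv Q" "hmax Q"] hv_le_hmax[of Q]
  by (simp add: size_eq_sum_hv[symmetric])

lemma finite_pillars: "0 < hmax Q \<Longrightarrow> finite {v. pillar Q v}"
  using hv_pos_iff[of Q] unfolding pillar_def
  by (metis (mono_tags, lifting) finite_imageI finite_set_mset finite_subset mem_Collect_eq subsetI)

lemma card_pillars_mult_hmax_le_size:
  assumes "0 < hmax Q"
  shows "card {v. pillar Q v} * hmax Q \<le> size Q"
proof -
  have finite: "finite {v. pillar Q v}"
    by (rule finite_pillars[OF assms])
  have "card {v. pillar Q v} * hmax Q = (\<Sum>v\<in>{v. pillar Q v}. hv Q v)"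
    unfolding pillar_def by simp
  also have "\<dots> \<le> size Q"
    by (rule sum_hv_le_size[OF finite])
  finally show ?thesis .
qed

text \<open>If every SA value of \<open>Q\<close> were frequent in \<open>R\<close>, then \<open>R\<close> would contain more than
  \<open>l\<close> values of frequency \<open>h(R)\<close>.\<close>
lemma fat_group_has_value_below_hmax:
  assumes fat: "l * hmax Q < size Q" and not_eligible: "size R < l * hmax R"
  shows "\<exists>u. 0 < hv Q u \<and> hv R u < hmax R"
proof (rule ccontr)
  define S where "S = snd ` set_mset Q"
  assume "\<not> ?thesis"
  then have frequent: "hmax R \<le> hv R u" if "u \<in> S" for u
    using that hv_pos_iff unfolding S_def by (metis not_less)
  have "l * hmax Q < card S * hmax Q"
    using fat size_le_card_values_mult_hmax[of Q] unfolding S_def by linarith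
  then have "l * hmax R \<le> card S * hmax R"
    by simp
  also have "\<dots> \<le> (\<Sum>u\<in>S. hv R u)"
    using sum_bounded_below[of S "hmax R" "hv R"] frequent by simp
  also have "\<dots> \<le> size R"
    by (rule sum_hv_le_size) (simp add: S_def)
  finally show False
    using not_eligible by simp
qed

lemma hmax_add_image_mset_set_le:
  assumes "finite P" and "\<And>p. p \<in> P \<Longrightarrow> hv R p < hmax R"
  shows "hmax (R + image_mset (\<lambda>p. (q, p)) (mset_set P)) \<le> hmax R"
  using assms hv_le_hmax[of R]
  by (intro hmax_leI) (auto simp: hv_plus hv_image_mset_set Suc_le_eq)

lemma hmax_add_singleton_le:
  assumes "hv R v < hmax R"
  shows "hmax (R + {#(q, v)#}) \<le> hmax R"
  using hmax_add_image_mset_set_le[of "{v}" R q] assms by simp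

lemma phase2_step_bounds:
  assumes "phase2_step l T (G, R) (G', R')"
  shows "size R < l * hmax R \<and> hmax R' \<le> hmax R \<and> size R' \<le> size R + l"
proof -
  obtain v q where minimal: "\<And>u. alive_val l T G R u \<Longrightarrow> hv R v \<le> hv R u"
    and q: "q \<in> QIs T" and alive: "alive_grp l (grp G q) R" and v: "0 < hv (grp G q) v"
    and move: "(fat l (grp G q) \<and> R' = R + {#(q, v)#}) \<or>
      (thin l (grp G q) \<and> R' = R + image_mset (\<lambda>p. (q, p)) (mset_set {p. pillar (grp G q) p}))"
    and not_eligible: "size R < l * hmax R"
    using assms unfolding phase2_step_def eligible_def by (auto simp: Let_def)
  define Q where "Q = grp G q"
  have "0 < hmax Q"
    using v hv_le_hmax[of Q v] unfolding Q_def by simp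
  from move show ?thesis
  proof (elim disjE conjE)
    assume "fat l (grp G q)" and R': "R' = R + {#(q, v)#}"
    then obtain u where "0 < hv Q u" and "hv R u < hmax R"
      using fat_group_has_value_below_hmax[of l Q R] not_eligible
      unfolding fat_def Q_def by auto
    moreover have "alive_val l T G R u"
      using \<open>0 < hv Q u\<close> q alive unfolding alive_val_def Q_def by blast
    ultimately have "hv R v < hmax R"
      using minimal by (meson le_less_trans)
    moreover have "0 < l"
      using not_eligible by (cases l) auto
    ultimately show ?thesis
      using R' hmax_add_singleton_le not_eligible by simp
  next
    define P where "P = {p. pillar Q p}"
    assume "thin l (grp G q)" and R': "R' = R + image_mset (\<lambda>p. (q, p)) (mset_set {p. pillar (grp G q) p})"
    then have thin: "size Q = l * hmax Q" and R'_P: "R' = R + image_mset (\<lambda>p. (q, p)) (mset_set P)"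
      unfolding thin_def P_def Q_def by simp_all
    have "card P \<le> l"
      using card_pillars_mult_hmax_le_size[OF \<open>0 < hmax Q\<close>] thin \<open>0 < hmax Q\<close>
      unfolding P_def by simp
    moreover have "finite P"
      using finite_pillars[OF \<open>0 < hmax Q\<close>] unfolding P_def .
    moreover have "hv R p < hmax R" if "p \<in> P" for p
      using that alive \<open>thin l (grp G q)\<close> hv_le_hmax[of R p]
      unfolding P_def Q_def alive_grp_def dead_def conflicting_def pillar_def
      by (auto simp: le_less)
    ultimately show ?thesis
      using R'_P hmax_add_image_mset_set_le[of P R q] not_eligible by simp
  qed
qed

lemma phase2_rtranclp_bounds:
  assumes "(phase2_step l T)\<^sup>*\<^sup>* (G1, R1) (G2, R2)" and "size R1 < l * hmax R1"
  shows "hmax R2 \<le> hmax R1 \<and> size R2 \<le> l * hmax R1 + l - 1"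
  using assms(1)
proof (induction "(G2, R2)" arbitrary: G2 R2 rule: rtranclp_induct)
  case base
  then show ?case using assms(2) by simp
next
  case (step s)
  obtain G R where s: "s = (G, R)" by (cases s)
  then have "hmax R \<le> hmax R1"
    using step.hyps(3) by simp
  moreover have "size R < l * hmax R \<and> hmax R2 \<le> hmax R \<and> size R2 \<le> size R + l"
    using phase2_step_bounds step.hyps(2) s by blast
  moreover have "l * hmax R \<le> l * hmax R1"
    using calculation(1) by simp
  ultimately show ?case by linarith
qed

theorem lemma6:
  fixes T :: "('q \<times> 'v) multiset" and l :: nat
  assumes "eligible l T"
    and "(phase1_step l T)\<^sup>*\<^sup>* (T, {#}) (G1, R1)"
    and "phase1_done l T G1"
    and "\<not> eligible l R1"
    and "(phase2_step l T)\<^sup>*\<^sup>* (G1, R1) (G2, R2)"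
    and "eligible l R2"
  shows "size R2 \<le> l * hmax R1 + l - 1"
  \<comment> \<open>The bound holds in every Phase Two state.\<close>
  using phase2_rtranclp_bounds[OF assms(5)] assms(4) unfolding eligible_def by simp

end
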